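(* Let $L$ be an atomic orthomodular lattice and let $V\in\mathcal{B}(L)$ be a $2$-dimensional Boolean subalgebra, with generating family $\mathcal{F}_V=\{P,P^{\perp}\}$. Then: (i) if $V$ is maximal in $\mathcal{B}(L)$, then $P$ and $P^{\perp}$ are (complementary) atoms of $L$; (ii) if $V$ is included in a $3$-dimensional $W\in\mathcal{B}(L)$ that is maximal in $\mathcal{B}(L)$, then one of $P,P^{\perp}$ is an atom of $L$ and the other is the join of two atoms of $L$; moreover, $W$ contains precisely two $2$-dimensional elements of $\mathcal{B}(L)$ other than $V$; (iii) if $V$ is neither maximal in $\mathcal{B}(L)$ nor included in a $3$-dimensional element of $\mathcal{B}(L)$ that is maximal in $\mathcal{B}(L)$, then one of $P,P^{\perp}$ is an atom of $L$ if and only if every $4$-dimensional $W\in\mathcal{B}(L)$ with $V\subseteq W$ contains precisely three $3$-dimensional elements $V_1,V_2,V_3\in\mathcal{B}(L)$ with $V\subset V_i$ for $i=1,2,3$.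
   Context: $L$ is a lattice with least element $0$, greatest element $1$ and an orthocomplementation $P\mapsto P^{\perp}$, which is orthomodular and atomic (every nonzero element lies above an atom, i.e. a minimal nonzero element). Elements $P,Q$ are orthogonal if $P\le Q^{\perp}$. A Boolean subalgebra (BSA) $V$ of $L$ is said to be generated by a family $\mathcal{F}$ of nonzero pairwise orthogonal elements of $L$ with join $1$ if the elements of $\mathcal{F}$ are the atoms of $V$ and every element of $V$ is a join of elements of $\mathcal{F}$; this family is denoted $\mathcal{F}_V$. $\mathcal{B}(L)$ denotes the set of those BSAs of $L$ that are generated by some such family, partially ordered by inclusion (only such BSAs are considered). The dimension of $V\in\mathcal{B}(L)$ is the cardinality of $\mathcal{F}_V$. "Maximal" means maximal in the poset $\mathcal{B}(L)$. *)

theory Defs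
  imports Main
begin

text \<open>The lattice L is modelled as a type of class bounded_lattice (least element bot = 0,
greatest element top = 1); the orthocomplementation is an explicit parameter oc.\<close>

definition orthocomplementation :: "('a::bounded_lattice \<Rightarrow> 'a) \<Rightarrow> bool" where
  "orthocomplementation oc \<longleftrightarrow>
     (\<forall>x. oc (oc x) = x) \<and>
     (\<forall>x y. x \<le> y \<longrightarrow> oc y \<le> oc x) \<and>
     (\<forall>x. inf x (oc x) = bot) \<and>
     (\<forall>x. sup x (oc x) = top)"

definition orthomodular :: "('a::bounded_lattice \<Rightarrow> 'a) \<Rightarrow> bool" where
  "orthomodular oc \<longleftrightarrow> orthocomplementation oc \<and>
     (\<forall>x y. x \<le> y \<longrightarrow> y = sup x (inf y (oc x)))"

definition atom :: "'a::bounded_lattice \<Rightarrow> bool" where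
  "atom a \<longleftrightarrow> a \<noteq> bot \<and> (\<forall>b. b \<le> a \<longrightarrow> b = bot \<or> b = a)"

definition atomic :: "'a::bounded_lattice itself \<Rightarrow> bool" where
  "atomic _ \<longleftrightarrow> (\<forall>x::'a. x \<noteq> bot \<longrightarrow> (\<exists>a. atom a \<and> a \<le> x))"

definition orthogonal :: "('a::bounded_lattice \<Rightarrow> 'a) \<Rightarrow> 'a \<Rightarrow> 'a \<Rightarrow> bool" where
  "orthogonal oc x y \<longleftrightarrow> x \<le> oc y"

definition is_join :: "'a::order set \<Rightarrow> 'a \<Rightarrow> bool" where
  "is_join S x \<longleftrightarrow> (\<forall>s\<in>S. s \<le> x) \<and> (\<forall>y. (\<forall>s\<in>S. s \<le> y) \<longrightarrow> x \<le> y)"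

definition boolean_subalgebra :: "('a::bounded_lattice \<Rightarrow> 'a) \<Rightarrow> 'a set \<Rightarrow> bool" where
  "boolean_subalgebra oc V \<longleftrightarrow>
     bot \<in> V \<and> top \<in> V \<and>
     (\<forall>x\<in>V. \<forall>y\<in>V. inf x y \<in> V \<and> sup x y \<in> V) \<and>
     (\<forall>x\<in>V. oc x \<in> V) \<and>
     (\<forall>x\<in>V. \<forall>y\<in>V. \<forall>z\<in>V. inf x (sup y z) = sup (inf x y) (inf x z))"

definition atoms_of :: "'a::bounded_lattice set \<Rightarrow> 'a set" where
  "atoms_of V = {a\<in>V. a \<noteq> bot \<and> (\<forall>b\<in>V. b \<le> a \<longrightarrow> b = bot \<or> b = a)}"

definition generated_by :: "('a::bounded_lattice \<Rightarrow> 'a) \<Rightarrow> 'a set \<Rightarrow> 'a set \<Rightarrow> bool" where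
  "generated_by oc F V \<longleftrightarrow>
     boolean_subalgebra oc V \<and>
     (\<forall>x\<in>F. x \<noteq> bot) \<and>
     (\<forall>x\<in>F. \<forall>y\<in>F. x \<noteq> y \<longrightarrow> orthogonal oc x y) \<and>
     is_join F top \<and>
     atoms_of V = F \<and>
     (\<forall>v\<in>V. \<exists>G\<subseteq>F. is_join G v)"

definition inB :: "('a::bounded_lattice \<Rightarrow> 'a) \<Rightarrow> 'a set \<Rightarrow> bool" where
  "inB oc V \<longleftrightarrow> (\<exists>F. generated_by oc F V)"

definition gen_family :: "'a::bounded_lattice set \<Rightarrow> 'a set" where
  "gen_family V = atoms_of V"

definition dim :: "'a::bounded_lattice set \<Rightarrow> nat" where
  "dim V = card (gen_family V)"

definition maximalB :: "('a::bounded_lattice \<Rightarrow> 'a) \<Rightarrow> 'a set \<Rightarrow> bool" where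
  "maximalB oc V \<longleftrightarrow> inB oc V \<and> \<not> (\<exists>W. inB oc W \<and> V \<subset> W)"

end

theory Submission
  imports Defs
begin

(*
  A finite-dimensional V in B(L) is exactly the set of joins of subsets of its generating
  family, a finite orthogonal partition of 1, and inclusions between such subalgebras are
  coarsenings of partitions.  By orthomodularity a non-atomic block a splits as
  a = b \<squnion> (a \<sqinter> b\<^sup>\<perp>) for any 0 < b < a, which refines the partition and strictly enlarges the
  subalgebra; hence all blocks of a maximal subalgebra are atoms, giving (i) and the atom
  statement of (ii).  The counts are counts of coarsenings: a three-block partition has three
  two-block coarsenings, while the three-block coarsenings of a four-block partition in which P
  survives number three if P or P\<^sup>\<perp> is a block, and at most two if each of P, P\<^sup>\<perp> is the join
  of two blocks -- the situation reached by splitting both P and P\<^sup>\<perp> when neither is an atom.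
*)

lemma subset_card3_cases:
  assumes "finite A" "card A = 3" "X \<subseteq> A" "X \<noteq> {}" "X \<noteq> A"
  obtains x where "X = {x}" | x where "A - X = {x}"
proof -
  have "finite X" using assms(1,3) finite_subset by blast
  then have "card X \<noteq> 0" using assms(4) by simp
  moreover have "card X < 3"
    using psubset_card_mono[OF assms(1), of X] assms(2,3,5) by (simp add: psubset_eq)
  ultimately have "card X = 1 \<or> card (A - X) = 1"
    using assms(2) card_Diff_subset[OF \<open>finite X\<close> assms(3)] by linarith
  then show thesis using that by (auto simp: card_1_singleton_iff)
qed

lemma subset_pair_cases:
  assumes "X \<subseteq> {a, b}" "X \<noteq> {}" "X \<noteq> {a, b}" "a \<noteq> b"
  shows "X = {a} \<or> X = {b}"
  using assms by blast

(* Meaningful only for finite G, where the join exists; every lemma below assumes finiteness. *)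
definition join_of :: "'a::bounded_lattice set \<Rightarrow> 'a" where
  "join_of G = (THE x. is_join G x)"

lemma is_join_unique: "is_join G x \<Longrightarrow> is_join G y \<Longrightarrow> x = y"
  unfolding is_join_def by (meson order.antisym)

lemma is_join_join_of: "finite G \<Longrightarrow> is_join G (join_of G)"
proof (induction G rule: finite_induct)
  case empty
  have "is_join {} (bot::'a)" unfolding is_join_def by simp
  then show ?case unfolding join_of_def by (metis is_join_unique theI)
next
  case (insert a G)
  then have "is_join (insert a G) (sup a (join_of G))"
    unfolding is_join_def by (auto intro: le_supI2)
  then show ?case unfolding join_of_def by (metis is_join_unique theI)
qed

lemma join_of_eqI: "finite G \<Longrightarrow> is_join G x \<Longrightarrow> join_of G = x"
  using is_join_join_of is_join_unique by blast

lemma join_of_le_iff: "finite G \<Longrightarrow> join_of G \<le> y \<longleftrightarrow> (\<forall>g\<in>G. g \<le> y)"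
  using is_join_join_of[of G] unfolding is_join_def by (meson order_trans)

lemma join_of_upper: "finite G \<Longrightarrow> g \<in> G \<Longrightarrow> g \<le> join_of G"
  using join_of_le_iff by blast

lemma join_of_empty [simp]: "join_of {} = bot"
  by (simp add: join_of_eqI is_join_def)

lemma join_of_insert: "finite G \<Longrightarrow> join_of (insert a G) = sup a (join_of G)"
  by (rule order.antisym) (auto simp: join_of_le_iff join_of_upper intro: le_supI2)

lemma join_of_singleton [simp]: "join_of {a} = a"
  by (simp add: join_of_insert)

lemma join_of_pair [simp]: "join_of {a, b} = sup a b"
  by (simp add: join_of_insert)

lemma join_of_mono: "finite H \<Longrightarrow> G \<subseteq> H \<Longrightarrow> join_of G \<le> join_of H"
  by (meson finite_subset join_of_le_iff join_of_upper subsetD)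

lemma join_of_Un: "finite G \<Longrightarrow> finite H \<Longrightarrow> join_of (G \<union> H) = sup (join_of G) (join_of H)"
  by (rule order.antisym) (auto simp: join_of_le_iff join_of_upper intro: le_supI1 le_supI2)

lemma join_of_closed:
  assumes "bot \<in> S" "\<forall>x\<in>S. \<forall>y\<in>S. sup x y \<in> S" "finite G" "G \<subseteq> S"
  shows "join_of G \<in> S"
  using assms(3,4) by (induction G rule: finite_induct) (use assms(1,2) in \<open>auto simp: join_of_insert\<close>)

locale orthomodular_lattice =
  fixes oc :: "'a::bounded_lattice \<Rightarrow> 'a"
  assumes orthomodular: "orthomodular oc"
begin

lemma oc_oc [simp]: "oc (oc x) = x"
  using orthomodular unfolding orthomodular_def orthocomplementation_def by blast

lemma oc_le_oc_iff [simp]: "oc x \<le> oc y \<longleftrightarrow> y \<le> x"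
  using orthomodular unfolding orthomodular_def orthocomplementation_def by (metis oc_oc)

lemma inf_oc [simp]: "inf x (oc x) = bot"
  using orthomodular unfolding orthomodular_def orthocomplementation_def by blast

lemma sup_oc [simp]: "sup x (oc x) = top"
  using orthomodular unfolding orthomodular_def orthocomplementation_def by blast

lemma orthomodular_law: "x \<le> y \<Longrightarrow> y = sup x (inf y (oc x))"
  using orthomodular unfolding orthomodular_def by blast

lemma oc_eq_iff [simp]: "oc x = oc y \<longleftrightarrow> x = y"
  by (metis oc_oc)

lemma oc_sup [simp]: "oc (sup x y) = inf (oc x) (oc y)"
proof (rule order.antisym)
  show "oc (sup x y) \<le> inf (oc x) (oc y)" by simp
  have "sup x y \<le> oc (inf (oc x) (oc y))"
    by (metis inf_le1 inf_le2 le_sup_iff oc_oc oc_le_oc_iff)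
  then show "inf (oc x) (oc y) \<le> oc (sup x y)"
    by (metis oc_oc oc_le_oc_iff)
qed

lemma oc_inf [simp]: "oc (inf x y) = sup (oc x) (oc y)"
  by (metis oc_oc oc_sup)

lemma oc_bot [simp]: "oc bot = top"
  by (metis sup_bot_left sup_oc)

lemma oc_top [simp]: "oc top = bot"
  by (metis oc_oc oc_bot)

lemma le_oc_commute: "x \<le> oc y \<longleftrightarrow> y \<le> oc x"
  by (metis oc_oc oc_le_oc_iff)

lemma le_and_le_oc_imp_bot: "z \<le> x \<Longrightarrow> z \<le> oc x \<Longrightarrow> z = bot"
  by (metis inf_oc le_bot le_inf_iff)

end

section \<open>Subalgebras generated by orthogonal partitions of 1\<close>

definition ortho_partition :: "('a::bounded_lattice \<Rightarrow> 'a) \<Rightarrow> 'a set \<Rightarrow> bool" where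
  "ortho_partition oc F \<longleftrightarrow>
     finite F \<and> bot \<notin> F \<and> (\<forall>x\<in>F. \<forall>y\<in>F. x \<noteq> y \<longrightarrow> x \<le> oc y) \<and> join_of F = top"

definition gen_bsa :: "'a::bounded_lattice set \<Rightarrow> 'a set" where
  "gen_bsa F = join_of ` Pow F"

lemma mem_gen_bsa_iff: "x \<in> gen_bsa F \<longleftrightarrow> (\<exists>G\<subseteq>F. x = join_of G)"
  unfolding gen_bsa_def by blast

lemma gen_bsaE:
  assumes "x \<in> gen_bsa F"
  obtains G where "G \<subseteq> F" "x = join_of G"
  using assms unfolding gen_bsa_def by blast

lemma join_of_mem_gen_bsa: "G \<subseteq> F \<Longrightarrow> join_of G \<in> gen_bsa F"
  unfolding gen_bsa_def by blast

lemma subset_gen_bsa: "F \<subseteq> gen_bsa F"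
  using join_of_mem_gen_bsa[of "{_}" F] by auto

lemma bot_mem_gen_bsa: "bot \<in> gen_bsa F"
  using join_of_mem_gen_bsa[of "{}" F] by simp

context orthomodular_lattice
begin

lemma ortho_partitionD:
  assumes "ortho_partition oc F"
  shows "finite F" "bot \<notin> F" "\<And>x y. x \<in> F \<Longrightarrow> y \<in> F \<Longrightarrow> x \<noteq> y \<Longrightarrow> x \<le> oc y"
    "join_of F = top"
  using assms unfolding ortho_partition_def by auto

lemma finite_subset_ortho_partition: "ortho_partition oc F \<Longrightarrow> G \<subseteq> F \<Longrightarrow> finite G"
  using ortho_partitionD(1) finite_subset by metis

lemma oc_join_of_partition:
  assumes F: "ortho_partition oc F" and G: "G \<subseteq> F"
  shows "oc (join_of G) = join_of (F - G)"
proof -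
  have fin: "finite G" "finite (F - G)"
    using finite_subset_ortho_partition[OF F] G by auto
  have "\<forall>f\<in>F - G. \<forall>g\<in>G. g \<le> oc f"
    using G ortho_partitionD(3)[OF F] by blast
  then have le: "join_of (F - G) \<le> oc (join_of G)"
    using fin by (metis join_of_le_iff le_oc_commute)
  have "sup (join_of G) (join_of (F - G)) = top"
    using G ortho_partitionD(4)[OF F] by (simp add: join_of_Un[OF fin, symmetric] Un_absorb1)
  then have "inf (oc (join_of G)) (oc (join_of (F - G))) = bot"
    by (metis oc_sup oc_top)
  then show ?thesis
    using orthomodular_law[OF le] by (metis sup_bot_right)
qed

lemma join_of_le_join_of_iff:
  assumes F: "ortho_partition oc F" and G: "G \<subseteq> F" and H: "H \<subseteq> F"
  shows "join_of G \<le> join_of H \<longleftrightarrow> G \<subseteq> H"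
proof
  assume le: "join_of G \<le> join_of H"
  show "G \<subseteq> H"
  proof
    fix a assume a: "a \<in> G"
    have fin: "finite G" "finite (F - H)" using finite_subset_ortho_partition[OF F] G by auto
    have "a \<le> join_of H" using le join_of_upper[OF fin(1) a] by (rule order_trans[rotated])
    moreover have "a \<le> oc (join_of H)" if "a \<notin> H"
    proof -
      have "a \<in> F - H" using a G that by blast
      then show ?thesis
        unfolding oc_join_of_partition[OF F H] by (rule join_of_upper[OF fin(2)])
    qed
    ultimately show "a \<in> H"
      using le_and_le_oc_imp_bot[of a "join_of H"] ortho_partitionD(2)[OF F] a G by blast
  qed
next
  assume "G \<subseteq> H"
  then show "join_of G \<le> join_of H"
    using join_of_mono[OF finite_subset_ortho_partition[OF F H]] by blast
qed

lemma join_of_inject: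
  assumes "ortho_partition oc F" "G \<subseteq> F" "H \<subseteq> F" "join_of G = join_of H"
  shows "G = H"
  using join_of_le_join_of_iff[OF assms(1-3)] join_of_le_join_of_iff[OF assms(1,3,2)] assms(4)
  by auto

lemma inf_join_of:
  assumes F: "ortho_partition oc F" and G: "G \<subseteq> F" and H: "H \<subseteq> F"
  shows "inf (join_of G) (join_of H) = join_of (G \<inter> H)"
proof -
  have "oc (inf (join_of G) (join_of H)) = join_of ((F - G) \<union> (F - H))"
    using ortho_partitionD(1)[OF F]
    by (simp add: oc_join_of_partition[OF F G] oc_join_of_partition[OF F H] join_of_Un)
  also have "(F - G) \<union> (F - H) = F - (G \<inter> H)" by blast
  also have "join_of \<dots> = oc (join_of (G \<inter> H))"
    using oc_join_of_partition[OF F, of "G \<inter> H"] G by (metis le_infI1)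
  finally show ?thesis by (simp only: oc_eq_iff)
qed

lemma sup_mem_gen_bsa:
  assumes F: "ortho_partition oc F" and "x \<in> gen_bsa F" "y \<in> gen_bsa F"
  shows "sup x y \<in> gen_bsa F"
proof -
  obtain G H where "G \<subseteq> F" "H \<subseteq> F" "x = join_of G" "y = join_of H"
    using assms(2,3) unfolding mem_gen_bsa_iff by blast
  moreover have "finite G" "finite H"
    using calculation(1,2) finite_subset_ortho_partition[OF F] by auto
  ultimately show ?thesis using join_of_mem_gen_bsa[of "G \<union> H" F] by (simp add: join_of_Un)
qed

lemma join_of_mem_gen_bsa_of_subset:
  assumes F: "ortho_partition oc F" and "finite G" "G \<subseteq> gen_bsa F"
  shows "join_of G \<in> gen_bsa F"
  using join_of_closed[of "gen_bsa F" G] bot_mem_gen_bsa sup_mem_gen_bsa[OF F] assms(2,3) by blast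

lemma gen_bsa_mono:
  assumes E: "ortho_partition oc E" and F: "finite F" "F \<subseteq> gen_bsa E"
  shows "gen_bsa F \<subseteq> gen_bsa E"
proof
  fix x assume "x \<in> gen_bsa F"
  then obtain G where "G \<subseteq> F" "x = join_of G" unfolding mem_gen_bsa_iff by blast
  then show "x \<in> gen_bsa E"
    using join_of_mem_gen_bsa_of_subset[OF E, of G] F finite_subset by blast
qed

lemma boolean_subalgebra_gen_bsa:
  assumes F: "ortho_partition oc F"
  shows "boolean_subalgebra oc (gen_bsa F)"
  unfolding boolean_subalgebra_def
proof (intro conjI ballI)
  note fin = finite_subset_ortho_partition[OF F]
  show "bot \<in> gen_bsa F" by (rule bot_mem_gen_bsa)
  show "top \<in> gen_bsa F"
    using join_of_mem_gen_bsa[of F F] ortho_partitionD(4)[OF F] by simp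
  fix x y assume "x \<in> gen_bsa F" "y \<in> gen_bsa F"
  then obtain G H where GH: "G \<subseteq> F" "H \<subseteq> F" "x = join_of G" "y = join_of H"
    unfolding mem_gen_bsa_iff by blast
  show "sup x y \<in> gen_bsa F" using sup_mem_gen_bsa[OF F] \<open>x \<in> _\<close> \<open>y \<in> _\<close> .
  show "inf x y \<in> gen_bsa F"
    using GH inf_join_of[OF F] join_of_mem_gen_bsa[of "G \<inter> H" F] by auto
  show "oc x \<in> gen_bsa F"
    using GH oc_join_of_partition[OF F] join_of_mem_gen_bsa[of "F - G" F] by auto
  fix z assume "z \<in> gen_bsa F"
  then obtain K where K: "K \<subseteq> F" "z = join_of K" unfolding mem_gen_bsa_iff by blast
  have "inf x (sup y z) = join_of (G \<inter> (H \<union> K))"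
    using GH K fin by (simp add: join_of_Un[symmetric] inf_join_of[OF F])
  also have "G \<inter> (H \<union> K) = (G \<inter> H) \<union> (G \<inter> K)" by blast
  also have "join_of \<dots> = sup (inf x y) (inf x z)"
    using GH K fin by (simp add: join_of_Un inf_join_of[OF F])
  finally show "inf x (sup y z) = sup (inf x y) (inf x z)" .
qed

lemma atoms_of_gen_bsa:
  assumes F: "ortho_partition oc F"
  shows "atoms_of (gen_bsa F) = F"
proof (intro equalityI subsetI)
  note fin = finite_subset_ortho_partition[OF F]
  fix x assume "x \<in> atoms_of (gen_bsa F)"
  then have x: "x \<in> gen_bsa F" "x \<noteq> bot" "\<forall>b\<in>gen_bsa F. b \<le> x \<longrightarrow> b = bot \<or> b = x"
    unfolding atoms_of_def by auto
  obtain G where G: "G \<subseteq> F" "x = join_of G" using x(1) by (rule gen_bsaE)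
  then obtain g where g: "g \<in> G" using x(2) by fastforce
  have "g \<le> x" using G(2) join_of_upper[OF fin[OF G(1)] g] by simp
  moreover have "g \<in> gen_bsa F" "g \<noteq> bot"
    using g G subset_gen_bsa[of F] ortho_partitionD(2)[OF F] by blast+
  ultimately have "g = x" using x(3) by blast
  then show "x \<in> F" using g G by blast
next
  fix a assume a: "a \<in> F"
  have "b = bot \<or> b = a" if b: "b \<in> gen_bsa F" "b \<le> a" for b
  proof -
    obtain H where H: "H \<subseteq> F" "b = join_of H" using b(1) by (rule gen_bsaE)
    have "join_of H \<le> join_of {a}" using b(2) H(2) by simp
    then have "H \<subseteq> {a}" using join_of_le_join_of_iff[OF F H(1), of "{a}"] a by blast
    then show ?thesis using H(2) by (auto simp: subset_singleton_iff)
  qed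
  moreover have "a \<in> gen_bsa F" "a \<noteq> bot"
    using a subset_gen_bsa[of F] ortho_partitionD(2)[OF F] by blast+
  ultimately show "a \<in> atoms_of (gen_bsa F)" unfolding atoms_of_def by blast
qed

lemma generated_by_gen_bsa:
  assumes F: "ortho_partition oc F"
  shows "generated_by oc F (gen_bsa F)"
proof -
  note fin = finite_subset_ortho_partition[OF F]
  have "is_join F top"
    using is_join_join_of[OF ortho_partitionD(1)[OF F]] ortho_partitionD(4)[OF F] by simp
  moreover have "\<exists>G\<subseteq>F. is_join G v" if "v \<in> gen_bsa F" for v
  proof -
    obtain G where "G \<subseteq> F" "v = join_of G" using \<open>v \<in> gen_bsa F\<close> by (rule gen_bsaE)
    then show ?thesis using is_join_join_of[OF fin] by blast
  qed
  moreover have "\<forall>x\<in>F. \<forall>y\<in>F. x \<noteq> y \<longrightarrow> orthogonal oc x y"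
    unfolding orthogonal_def using ortho_partitionD(3)[OF F] by blast
  moreover have "\<forall>x\<in>F. x \<noteq> bot" using ortho_partitionD(2)[OF F] by blast
  ultimately show ?thesis
    unfolding generated_by_def
    using boolean_subalgebra_gen_bsa[OF F] atoms_of_gen_bsa[OF F] by blast
qed

lemma inB_gen_bsa: "ortho_partition oc F \<Longrightarrow> inB oc (gen_bsa F)"
  unfolding inB_def by (rule exI) (rule generated_by_gen_bsa)

lemma gen_family_gen_bsa: "ortho_partition oc F \<Longrightarrow> gen_family (gen_bsa F) = F"
  unfolding gen_family_def by (rule atoms_of_gen_bsa)

lemma dim_gen_bsa: "ortho_partition oc F \<Longrightarrow> dim (gen_bsa F) = card F"
  unfolding dim_def by (simp add: gen_family_gen_bsa)

lemma gen_bsa_eq_iff: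
  assumes "ortho_partition oc F" "ortho_partition oc G"
  shows "gen_bsa F = gen_bsa G \<longleftrightarrow> F = G"
  by (metis assms gen_family_gen_bsa)

lemma inB_dimE:
  assumes U: "inB oc U" "dim U = n" "n > 0"
  obtains E where "ortho_partition oc E" "card E = n" "U = gen_bsa E"
proof -
  obtain E where "generated_by oc E U" using U(1) unfolding inB_def by (rule exE)
  then have bsa: "boolean_subalgebra oc U" and nz: "\<forall>x\<in>E. x \<noteq> bot"
    and orth: "\<forall>x\<in>E. \<forall>y\<in>E. x \<noteq> y \<longrightarrow> x \<le> oc y" and top: "is_join E top"
    and atoms: "atoms_of U = E" and rep: "\<forall>v\<in>U. \<exists>G\<subseteq>E. is_join G v"
    unfolding generated_by_def orthogonal_def by simp_all
  have card: "card E = n" using U(2) atoms unfolding dim_def gen_family_def by simp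
  then have fin: "finite E" using U(3) card.infinite by force
  have part: "ortho_partition oc E"
    unfolding ortho_partition_def using fin nz orth join_of_eqI[OF fin top] by blast
  have "U = gen_bsa E"
  proof (intro equalityI subsetI)
    fix v assume "v \<in> U"
    then obtain G where "G \<subseteq> E" "is_join G v" using rep by blast
    then show "v \<in> gen_bsa E"
      using join_of_eqI[OF finite_subset_ortho_partition[OF part]] join_of_mem_gen_bsa by metis
  next
    have "E \<subseteq> U" using atoms unfolding atoms_of_def by blast
    fix v assume "v \<in> gen_bsa E"
    then obtain G where "G \<subseteq> E" "v = join_of G" by (rule gen_bsaE)
    then show "v \<in> U"
      using bsa join_of_closed[of U G] finite_subset_ortho_partition[OF part] \<open>E \<subseteq> U\<close>
      unfolding boolean_subalgebra_def by blast
  qed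
  with part card show thesis by (rule that)
qed

section \<open>Refining a partition at a non-atom\<close>

lemma below_member_not_member:
  assumes F: "ortho_partition oc F" and a: "a \<in> F" and x: "x \<le> a" "x \<noteq> bot" "x \<noteq> a"
  shows "x \<notin> F"
proof
  assume "x \<in> F"
  then have "x \<le> oc a" using ortho_partitionD(3)[OF F] a x(3) by blast
  then show False using le_and_le_oc_imp_bot[OF x(1)] x(2) by blast
qed

lemma ortho_partition_split:
  assumes F: "ortho_partition oc F" and a: "a \<in> F" and b: "b \<le> a" "b \<noteq> bot" "b \<noteq> a"
  defines "c \<equiv> inf a (oc b)"
  shows "ortho_partition oc (insert b (insert c (F - {a})))"
    and "a = sup b c" "b \<noteq> c" "b \<notin> F" "c \<notin> F"
proof -
  show a_eq: "a = sup b c" unfolding c_def using orthomodular_law[OF b(1)] .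
  have c: "c \<le> a" "c \<le> oc b" unfolding c_def by auto
  have "c \<noteq> bot" using a_eq b(3) by auto
  have "c \<noteq> a"
    using b c(2) le_and_le_oc_imp_bot[of b b] order_trans[of b a "oc b"] by auto
  show "b \<notin> F" using below_member_not_member[OF F a b] .
  show "c \<notin> F" using below_member_not_member[OF F a c(1) \<open>c \<noteq> bot\<close> \<open>c \<noteq> a\<close>] .
  show "b \<noteq> c" using c(2) le_and_le_oc_imp_bot[of b b] b(2) by auto
  have below_a: "u \<le> oc v" "v \<le> oc u" if "u \<in> F - {a}" "v \<le> a" for u v
  proof -
    have "u \<le> oc a" using ortho_partitionD(3)[OF F] a that(1) by blast
    then show "v \<le> oc u" using that(2) le_oc_commute order_trans by blast
    then show "u \<le> oc v" using le_oc_commute by blast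
  qed
  have "b \<le> oc c" using c(2) le_oc_commute by blast
  then have orth: "\<forall>x\<in>insert b (insert c (F - {a})). \<forall>y\<in>insert b (insert c (F - {a})).
      x \<noteq> y \<longrightarrow> x \<le> oc y"
    using below_a[of _ b] below_a[of _ c] b(1) c ortho_partitionD(3)[OF F] by auto
  have "join_of (insert b (insert c (F - {a}))) = sup a (join_of (F - {a}))"
    using ortho_partitionD(1)[OF F] a_eq by (simp add: join_of_insert sup_assoc)
  also have "\<dots> = top"
    using ortho_partitionD(1,4)[OF F] a join_of_insert[of "F - {a}" a] by (simp add: insert_absorb)
  finally show "ortho_partition oc (insert b (insert c (F - {a})))"
    unfolding ortho_partition_def
    using orth ortho_partitionD(1,2)[OF F] \<open>b \<noteq> bot\<close> \<open>c \<noteq> bot\<close> by auto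
qed

lemma non_atom_refinement:
  assumes F: "ortho_partition oc F" and a: "a \<in> F" and "\<not> atom a"
  obtains b c where "ortho_partition oc (insert b (insert c (F - {a})))"
    "gen_bsa F \<subset> gen_bsa (insert b (insert c (F - {a})))"
    "a = sup b c" "b \<noteq> c" "b \<notin> F" "c \<notin> F"
proof -
  obtain b where b: "b \<le> a" "b \<noteq> bot" "b \<noteq> a"
    using assms(3) a ortho_partitionD(2)[OF F] unfolding atom_def by blast
  define c where "c = inf a (oc b)"
  define F' where "F' = insert b (insert c (F - {a}))"
  note split = ortho_partition_split[OF F a b, folded c_def, folded F'_def]
  have "F \<subseteq> gen_bsa F'"
  proof
    fix x assume "x \<in> F"
    show "x \<in> gen_bsa F'"
    proof (cases "x = a")
      case True
      then show ?thesis using join_of_mem_gen_bsa[of "{b, c}" F'] split(2) unfolding F'_def by simp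
    next
      case False
      then show ?thesis using \<open>x \<in> F\<close> subset_gen_bsa[of F'] unfolding F'_def by blast
    qed
  qed
  then have "gen_bsa F \<subseteq> gen_bsa F'"
    using gen_bsa_mono[OF split(1) ortho_partitionD(1)[OF F]] by blast
  moreover have "b \<notin> gen_bsa F"
    using b a atoms_of_gen_bsa[OF F] unfolding atoms_of_def by blast
  moreover have "b \<in> gen_bsa F'" using subset_gen_bsa[of F'] unfolding F'_def by blast
  ultimately have "gen_bsa F \<subset> gen_bsa F'" by blast
  with split show thesis unfolding F'_def by (intro that)
qed

lemma maximalB_imp_atom:
  assumes F: "ortho_partition oc F" and "maximalB oc (gen_bsa F)" and a: "a \<in> F"
  shows "atom a"
proof (rule ccontr)
  assume "\<not> atom a"
  then obtain F' where "ortho_partition oc F'" "gen_bsa F \<subset> gen_bsa F'"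
    using non_atom_refinement[OF F a] by metis
  then show False using assms(2) inB_gen_bsa unfolding maximalB_def by blast
qed

lemma atom_mem_gen_bsa_imp_mem:
  assumes E: "ortho_partition oc E" and x: "x \<in> gen_bsa E" "atom x"
  shows "x \<in> E"
proof -
  obtain X where X: "X \<subseteq> E" "x = join_of X" using x(1) by (rule gen_bsaE)
  then obtain e where e: "e \<in> X" using x(2) unfolding atom_def by fastforce
  have "e \<le> x" using X join_of_upper[OF finite_subset_ortho_partition[OF E X(1)] e] by simp
  moreover have "e \<noteq> bot" using e X ortho_partitionD(2)[OF E] by blast
  ultimately have "e = x" using x(2) unfolding atom_def by blast
  then show ?thesis using e X by blast
qed

section \<open>Subalgebras of dimension two and three\<close>

definition bsa2 :: "'a \<Rightarrow> 'a set" where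
  "bsa2 x = gen_bsa {x, oc x}"

lemma bsa2_oc [simp]: "bsa2 (oc x) = bsa2 x"
  unfolding bsa2_def by (simp add: insert_commute)

lemma mem_bsa2: "x \<in> bsa2 x"
  unfolding bsa2_def using subset_gen_bsa[of "{x, oc x}"] by blast

lemma ortho_partition_pair:
  assumes "x \<noteq> bot" "x \<noteq> top"
  shows "ortho_partition oc {x, oc x}" and "card {x, oc x} = 2"
proof -
  have "oc x \<noteq> bot" using assms(2) by (metis oc_bot oc_oc)
  then show "ortho_partition oc {x, oc x}" unfolding ortho_partition_def using assms by auto
  have "x \<noteq> oc x" using assms(1) inf_oc by (metis inf.idem)
  then show "card {x, oc x} = 2" by simp
qed

lemma inB_bsa2: "x \<noteq> bot \<Longrightarrow> x \<noteq> top \<Longrightarrow> inB oc (bsa2 x)"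
  unfolding bsa2_def by (rule inB_gen_bsa) (rule ortho_partition_pair)

lemma dim_bsa2: "x \<noteq> bot \<Longrightarrow> x \<noteq> top \<Longrightarrow> dim (bsa2 x) = 2"
  unfolding bsa2_def using dim_gen_bsa ortho_partition_pair by metis

lemma bsa2_subset_gen_bsa:
  assumes E: "ortho_partition oc E" and x: "x \<in> gen_bsa E"
  shows "bsa2 x \<subseteq> gen_bsa E"
  unfolding bsa2_def using gen_bsa_mono[OF E] x boolean_subalgebra_gen_bsa[OF E]
  unfolding boolean_subalgebra_def by simp

lemma ortho_partition_pair_eq_oc:
  assumes "ortho_partition oc {x, y}" "x \<noteq> y"
  shows "y = oc x"
  using oc_join_of_partition[OF assms(1), of "{x}"] assms(2) by (simp add: insert_Diff_if)

lemma dim2E: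
  assumes "inB oc U" "dim U = 2"
  obtains x where "U = bsa2 x" "x \<noteq> bot" "x \<noteq> top" "x \<in> U"
proof -
  obtain E where E: "ortho_partition oc E" "card E = 2" "U = gen_bsa E"
    using inB_dimE[OF assms] by auto
  then obtain x y where xy: "E = {x, y}" "x \<noteq> y" by (meson card_2_iff)
  then have "y = oc x" using ortho_partition_pair_eq_oc E(1) by blast
  moreover have "x \<noteq> bot" "y \<noteq> bot" using ortho_partitionD(2)[OF E(1)] xy by auto
  ultimately have "x \<noteq> bot" "x \<noteq> top" "y = oc x" by auto
  then show thesis
    using that[of x] E(3) xy subset_gen_bsa[of E] unfolding bsa2_def by auto
qed

lemma dim2_subalgebras_eq:
  assumes E: "ortho_partition oc E"
  shows "{U. inB oc U \<and> dim U = 2 \<and> U \<subseteq> gen_bsa E} = bsa2 ` (gen_bsa E - {bot, top})"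
proof (intro equalityI subsetI)
  fix U assume "U \<in> {U. inB oc U \<and> dim U = 2 \<and> U \<subseteq> gen_bsa E}"
  then have U: "inB oc U" "dim U = 2" "U \<subseteq> gen_bsa E" by auto
  obtain x where "U = bsa2 x" "x \<noteq> bot" "x \<noteq> top" "x \<in> U" by (rule dim2E[OF U(1,2)])
  then show "U \<in> bsa2 ` (gen_bsa E - {bot, top})" using U(3) by blast
next
  fix U assume "U \<in> bsa2 ` (gen_bsa E - {bot, top})"
  then obtain x where "U = bsa2 x" "x \<in> gen_bsa E" "x \<noteq> bot" "x \<noteq> top" by blast
  then show "U \<in> {U. inB oc U \<and> dim U = 2 \<and> U \<subseteq> gen_bsa E}"
    using inB_bsa2 dim_bsa2 bsa2_subset_gen_bsa[OF E] by blast
qed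

lemma oc_member_ne_member:
  assumes E: "ortho_partition oc E" "card E \<noteq> 2" and e: "e \<in> E" "e' \<in> E"
  shows "oc e \<noteq> e'"
proof
  have "{e} \<subseteq> E" using e(1) by simp
  from oc_join_of_partition[OF E(1) this] have "oc e = join_of (E - {e})" by simp
  moreover assume "oc e = e'"
  ultimately have "join_of (E - {e}) = join_of {e'}" by (metis join_of_singleton)
  from join_of_inject[OF E(1) Diff_subset _ this] have "E - {e} = {e'}" using e(2) by simp
  then have "card E - 1 = 1" using card_Diff_singleton[OF e(1)] by simp
  moreover have "card E \<noteq> 0" using ortho_partitionD(1)[OF E(1)] e(1) by auto
  ultimately show False using E(2) by linarith
qed

lemma dim3_mem_or_oc_mem:
  assumes E: "ortho_partition oc E" "card E = 3" and x: "x \<in> gen_bsa E" "x \<noteq> bot" "x \<noteq> top"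
  shows "x \<in> E \<or> oc x \<in> E"
proof -
  obtain X where X: "X \<subseteq> E" "x = join_of X" using x(1) by (rule gen_bsaE)
  have "X \<noteq> {}" using X(2) x(2) by auto
  moreover have "X \<noteq> E" using X(2) x(3) ortho_partitionD(4)[OF E(1)] by auto
  ultimately consider e where "X = {e}" | e where "E - X = {e}"
    using subset_card3_cases[OF ortho_partitionD(1)[OF E(1)] E(2) X(1)] by metis
  then show ?thesis
  proof cases
    case (1 e)
    then show ?thesis using X by simp
  next
    case (2 e)
    then show ?thesis using oc_join_of_partition[OF E(1) X(1)] X by auto
  qed
qed

lemma dim3_oc_member_eq_sup:
  assumes E: "ortho_partition oc E" "card E = 3" and e: "e \<in> E"
  obtains u v where "u \<in> E" "v \<in> E" "u \<noteq> v" "oc e = sup u v"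
proof -
  have "card (E - {e}) = 2" using E(2) card_Diff_singleton[OF e] by simp
  then obtain u v where uv: "E - {e} = {u, v}" "u \<noteq> v" by (meson card_2_iff)
  have "{e} \<subseteq> E" using e by simp
  from oc_join_of_partition[OF E(1) this] have "oc e = sup u v" using uv(1) by simp
  with uv show thesis using that by blast
qed

lemma member_ne_top:
  assumes E: "ortho_partition oc E" and e: "e \<in> E" "e' \<in> E" "e' \<noteq> e"
  shows "e \<noteq> top"
proof
  assume "e = top"
  then have "e' = bot" using ortho_partitionD(3)[OF E e(2,1,3)] by (simp add: bot_unique)
  then show False using ortho_partitionD(2)[OF E] e(2) by blast
qed

lemma member_ne_bot_top:
  assumes E: "ortho_partition oc E" "card E \<ge> 2" and e: "e \<in> E"
  shows "e \<noteq> bot" "e \<noteq> top"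
proof -
  show "e \<noteq> bot" using ortho_partitionD(2)[OF E(1)] e by blast
  have "card (E - {e}) \<noteq> 0" using E(2) card_Diff_singleton[OF e] by simp
  then obtain e' where "e' \<in> E - {e}" by (metis card.empty ex_in_conv)
  then show "e \<noteq> top" using member_ne_top[OF E(1) e] by blast
qed

lemma bsa2_inj_on_dim3:
  assumes E: "ortho_partition oc E" "card E = 3"
  shows "inj_on bsa2 E"
proof (rule inj_onI)
  fix e e' assume e: "e \<in> E" "e' \<in> E" and eq: "bsa2 e = bsa2 e'"
  have "ortho_partition oc {e, oc e}" "ortho_partition oc {e', oc e'}"
    using ortho_partition_pair member_ne_bot_top[OF E(1)] E(2) e by simp_all
  then have "{e, oc e} = {e', oc e'}" using eq gen_bsa_eq_iff unfolding bsa2_def by blast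
  moreover have "oc e \<noteq> e'" using oc_member_ne_member[OF E(1) _ e] E(2) by simp
  ultimately show "e = e'" by (metis doubleton_eq_iff)
qed

lemma card_dim2_subalgebras_dim3:
  assumes E: "ortho_partition oc E" "card E = 3"
  shows "card {U. inB oc U \<and> dim U = 2 \<and> U \<subseteq> gen_bsa E} = 3"
proof -
  have "bsa2 ` (gen_bsa E - {bot, top}) = bsa2 ` E"
  proof (intro equalityI subsetI)
    fix U assume "U \<in> bsa2 ` (gen_bsa E - {bot, top})"
    then obtain x where x: "U = bsa2 x" "x \<in> gen_bsa E" "x \<noteq> bot" "x \<noteq> top" by blast
    then have "x \<in> E \<or> oc x \<in> E" using dim3_mem_or_oc_mem[OF E] by blast
    then show "U \<in> bsa2 ` E" using x(1) bsa2_oc by (metis image_eqI)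
  next
    fix U assume "U \<in> bsa2 ` E"
    moreover have "E \<subseteq> gen_bsa E - {bot, top}"
      using subset_gen_bsa[of E] member_ne_bot_top[OF E(1)] E(2) by auto
    ultimately show "U \<in> bsa2 ` (gen_bsa E - {bot, top})" by blast
  qed
  then show ?thesis
    using dim2_subalgebras_eq[OF E(1)] card_image[OF bsa2_inj_on_dim3[OF E]] E(2) by simp
qed

lemma card_other_dim2_subalgebras:
  assumes W: "inB oc W" "dim W = 3" and V: "inB oc V" "dim V = 2" "V \<subseteq> W"
  shows "card {U. inB oc U \<and> dim U = 2 \<and> U \<subseteq> W \<and> U \<noteq> V} = 2"
proof -
  obtain E where E: "ortho_partition oc E" "card E = 3" "W = gen_bsa E"
    using inB_dimE[OF W] by auto
  let ?S = "{U. inB oc U \<and> dim U = 2 \<and> U \<subseteq> W}"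
  have "card ?S = 3" using card_dim2_subalgebras_dim3[OF E(1,2)] E(3) by simp
  moreover have "{U. inB oc U \<and> dim U = 2 \<and> U \<subseteq> W \<and> U \<noteq> V} = ?S - {V}" by blast
  moreover have "V \<in> ?S" using V by blast
  ultimately show ?thesis by (simp add: card_Diff_singleton)
qed

lemma maximalB_dim3_atoms:
  assumes W: "inB oc W" "dim W = 3" "maximalB oc W" and P: "P \<in> W" "P \<noteq> bot" "P \<noteq> top"
  shows "(atom P \<and> (\<exists>a b. atom a \<and> atom b \<and> a \<noteq> b \<and> oc P = sup a b)) \<or>
         (atom (oc P) \<and> (\<exists>a b. atom a \<and> atom b \<and> a \<noteq> b \<and> P = sup a b))"
proof -
  obtain E where E: "ortho_partition oc E" "card E = 3" "W = gen_bsa E"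
    using inB_dimE[OF W(1,2)] by auto
  have atoms: "atom e" if "e \<in> E" for e
    using maximalB_imp_atom[OF E(1)] W(3) E(3) that by blast
  have split: "atom e \<and> (\<exists>a b. atom a \<and> atom b \<and> a \<noteq> b \<and> oc e = sup a b)" if "e \<in> E" for e
    using dim3_oc_member_eq_sup[OF E(1,2) that] atoms that by metis
  show ?thesis
    using dim3_mem_or_oc_mem[OF E(1,2)] P E(3) split[of P] split[of "oc P"] by auto
qed

section \<open>Three-dimensional subalgebras inside a four-dimensional one\<close>

lemma dim3_partition_containing_join:
  assumes E: "ortho_partition oc E" "Y \<subseteq> E"
    and F: "ortho_partition oc F" "card F = 3" "join_of Y \<in> F" "F \<subseteq> gen_bsa E"
  obtains X where "X \<subseteq> E - Y" "X \<noteq> {}" "X \<noteq> E - Y"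
    "F = {join_of Y, join_of X, join_of (E - Y - X)}"
proof -
  let ?y = "join_of Y"
  have "card (F - {?y}) = 2" using F(2) card_Diff_singleton[OF F(3)] by simp
  then obtain f g where fg: "F - {?y} = {f, g}" "f \<noteq> g" by (meson card_2_iff)
  then have f: "f \<in> F" "f \<noteq> ?y" "g \<in> F" "g \<noteq> ?y" by auto
  obtain X where X: "X \<subseteq> E" "f = join_of X" using F(4) f(1) gen_bsaE by blast
  have "f \<le> oc ?y" using ortho_partitionD(3)[OF F(1) f(1) F(3) f(2)] .
  also have "oc ?y = join_of (E - Y)" by (rule oc_join_of_partition[OF E])
  finally have XY: "X \<subseteq> E - Y" using join_of_le_join_of_iff[OF E(1) X(1), of "E - Y"] X(2) by simp
  have "{?y, f} \<subseteq> F" using f F(3) by blast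
  moreover have "F - {?y, f} = {g}" using fg by blast
  ultimately have "oc (join_of {?y, f}) = join_of {g}" using oc_join_of_partition[OF F(1)] by metis
  moreover have "join_of {?y, f} = join_of (Y \<union> X)"
    using X finite_subset_ortho_partition[OF E(1)] E(2) by (simp add: join_of_Un)
  moreover have "oc (join_of (Y \<union> X)) = join_of (E - Y - X)"
  proof -
    have "Y \<union> X \<subseteq> E" using E(2) XY by blast
    moreover have "E - (Y \<union> X) = E - Y - X" by blast
    ultimately show ?thesis using oc_join_of_partition[OF E(1)] by metis
  qed
  ultimately have g: "g = join_of (E - Y - X)" by (metis join_of_singleton)
  have "X \<noteq> {}" using X(2) f(1) ortho_partitionD(2)[OF F(1)] by auto
  moreover have "X \<noteq> E - Y" using g f(3) ortho_partitionD(2)[OF F(1)] by auto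
  moreover have "F = {?y, join_of X, join_of (E - Y - X)}" using fg F(3) X(2) g by blast
  ultimately show thesis using XY that by blast
qed

lemma ortho_partition_three_blocks:
  assumes E: "ortho_partition oc E" and Y: "Y \<subseteq> E" "Y \<noteq> {}"
    and X: "X \<subseteq> E - Y" "X \<noteq> {}" "X \<noteq> E - Y"
  defines "F \<equiv> {join_of Y, join_of X, join_of (E - Y - X)}"
  shows "ortho_partition oc F" "card F = 3" "F \<subseteq> gen_bsa E"
proof -
  define Z where "Z = E - Y - X"
  have F: "F = {join_of Y, join_of X, join_of Z}" unfolding F_def Z_def ..
  have sub: "Y \<subseteq> E" "X \<subseteq> E" "Z \<subseteq> E" using Y X unfolding Z_def by auto
  have ne: "Y \<noteq> {}" "X \<noteq> {}" "Z \<noteq> {}" using Y X unfolding Z_def by blast+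
  have dj: "Y \<inter> X = {}" "Y \<inter> Z = {}" "X \<inter> Z = {}" using X(1) unfolding Z_def by auto
  have fin: "finite Y" "finite X" "finite Z"
    using finite_subset_ortho_partition[OF E] sub by blast+
  have orth: "join_of A \<le> oc (join_of B)" if "A \<subseteq> E" "B \<subseteq> E" "A \<inter> B = {}" for A B
    using that join_of_le_join_of_iff[OF E that(1), of "E - B"] oc_join_of_partition[OF E that(2)]
    by auto
  have nb: "join_of A \<noteq> bot" if "A \<subseteq> E" "A \<noteq> {}" for A
    using that join_of_inject[OF E that(1) empty_subsetI] by auto
  have ds: "join_of A \<noteq> join_of B" if "A \<subseteq> E" "B \<subseteq> E" "A \<inter> B = {}" "A \<noteq> {}" for A B
    using that join_of_inject[OF E that(1,2)] by auto
  have "join_of F = join_of (Y \<union> (X \<union> Z))"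
    unfolding F using fin by (simp add: join_of_Un join_of_insert)
  also have "Y \<union> (X \<union> Z) = E" using Y X unfolding Z_def by blast
  finally have "join_of F = top" using ortho_partitionD(4)[OF E] by simp
  moreover have "\<forall>x\<in>F. \<forall>y\<in>F. x \<noteq> y \<longrightarrow> x \<le> oc y"
  proof -
    have "X \<inter> Y = {}" "Z \<inter> Y = {}" "Z \<inter> X = {}" using dj by blast+
    then show ?thesis
      unfolding F using orth[OF sub(1,2) dj(1)] orth[OF sub(1,3) dj(2)] orth[OF sub(2,3) dj(3)]
        orth[OF sub(2,1)] orth[OF sub(3,1)] orth[OF sub(3,2)] by auto
  qed
  moreover have "bot \<notin> F" unfolding F using nb[OF sub(1) ne(1)] nb[OF sub(2) ne(2)] nb[OF sub(3) ne(3)] by auto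
  moreover have "finite F" unfolding F by simp
  ultimately show "ortho_partition oc F" unfolding ortho_partition_def by blast
  show "card F = 3"
    unfolding F using ds[OF sub(1,2) dj(1) ne(1)] ds[OF sub(1,3) dj(2) ne(1)] ds[OF sub(2,3) dj(3) ne(2)]
    by simp
  show "F \<subseteq> gen_bsa E" unfolding F using sub join_of_mem_gen_bsa by blast
qed

lemma dim3_partition_above_member:
  assumes E: "ortho_partition oc E" "card E = 4" and a: "a \<in> E"
    and F: "ortho_partition oc F" "card F = 3" "a \<in> gen_bsa F" "F \<subseteq> gen_bsa E"
  obtains x where "x \<in> E - {a}" "F = {a, x, join_of (E - {a} - {x})}"
proof -
  have card_rest: "card (E - {a}) = 3" using E(2) card_Diff_singleton[OF a] by simp
  have "a \<noteq> bot" "a \<noteq> top" using member_ne_bot_top[OF E(1) _ a] E(2) by simp_all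
  then have "a \<in> F \<or> oc a \<in> F" using dim3_mem_or_oc_mem[OF F(1,2,3)] by blast
  \<comment> \<open>Otherwise the two other blocks of \<open>F\<close> would split the block \<open>a\<close> of \<open>E\<close>.\<close>
  moreover have "oc a \<notin> F"
  proof
    assume "oc a \<in> F"
    moreover have "oc a = join_of (E - {a})" using oc_join_of_partition[OF E(1), of "{a}"] a by simp
    ultimately have "join_of (E - {a}) \<in> F" by simp
    then obtain X where "X \<subseteq> E - (E - {a})" "X \<noteq> {}" "X \<noteq> E - (E - {a})"
      "F = {join_of (E - {a}), join_of X, join_of (E - (E - {a}) - X)}"
      by (rule dim3_partition_containing_join[OF E(1) Diff_subset F(1,2) _ F(4)])
    moreover have "E - (E - {a}) = {a}" using a by blast
    ultimately show False by blast
  qed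
  ultimately have "join_of {a} \<in> F" by simp
  moreover have "{a} \<subseteq> E" using a by simp
  ultimately obtain X where X: "X \<subseteq> E - {a}" "X \<noteq> {}" "X \<noteq> E - {a}"
    and F_eq': "F = {join_of {a}, join_of X, join_of (E - {a} - X)}"
    using dim3_partition_containing_join[OF E(1) _ F(1,2) _ F(4)] by blast
  have F_eq: "F = {a, join_of X, join_of (E - {a} - X)}" using F_eq' by simp
  consider x where "X = {x}" | x where "E - {a} - X = {x}"
    using subset_card3_cases[OF finite_subset_ortho_partition[OF E(1) Diff_subset] card_rest X] by metis
  then obtain x where x: "x \<in> E - {a}"
    "{join_of X, join_of (E - {a} - X)} = {x, join_of (E - {a} - {x})}"
  proof cases
    case (1 x)
    then show thesis using that[of x] X(1) by simp
  next
    case (2 x)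
    then have "x \<in> E - {a}" "X = E - {a} - {x}" using X(1) by blast+
    then show thesis using that[of x] 2 by (simp add: insert_commute)
  qed
  then show thesis using that[of x] F_eq by simp
qed

lemma dim3_above_bsa2E:
  assumes "inB oc U" "dim U = 3" "bsa2 x \<subseteq> U" "U \<subseteq> gen_bsa E"
  obtains F where "ortho_partition oc F" "card F = 3" "U = gen_bsa F" "x \<in> gen_bsa F"
    "F \<subseteq> gen_bsa E"
proof -
  obtain F where F: "ortho_partition oc F" "card F = 3" "U = gen_bsa F"
    using inB_dimE[OF assms(1,2)] by auto
  moreover have "x \<in> gen_bsa F" using mem_bsa2[of x] assms(3) F(3) by blast
  moreover have "F \<subseteq> gen_bsa E" using subset_gen_bsa[of F] F(3) assms(4) by blast
  ultimately show thesis by (rule that)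
qed

lemma gen_bsa_dim3_above_bsa2:
  assumes E: "ortho_partition oc E"
    and F: "ortho_partition oc F" "card F = 3" "x \<in> F" "F \<subseteq> gen_bsa E"
  shows "gen_bsa F \<in> {U. inB oc U \<and> dim U = 3 \<and> bsa2 x \<subset> U \<and> U \<subseteq> gen_bsa E}"
proof -
  have "x \<noteq> bot" "x \<noteq> top" using member_ne_bot_top[OF F(1) _ F(3)] F(2) by simp_all
  then have "dim (bsa2 x) = 2" by (rule dim_bsa2)
  moreover have "dim (gen_bsa F) = 3" using dim_gen_bsa[OF F(1)] F(2) by simp
  moreover have "bsa2 x \<subseteq> gen_bsa F" using bsa2_subset_gen_bsa[OF F(1)] subset_gen_bsa F(3) by blast
  moreover have "gen_bsa F \<subseteq> gen_bsa E"
    using gen_bsa_mono[OF E ortho_partitionD(1)[OF F(1)] F(4)] .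
  ultimately show ?thesis using inB_gen_bsa[OF F(1)] by auto
qed

lemma ortho_partition_coarsen3:
  assumes E: "ortho_partition oc E" "3 \<le> card E" and a: "a \<in> E" and x: "x \<in> E - {a}"
  shows "ortho_partition oc {a, x, join_of (E - {a} - {x})}"
    "card {a, x, join_of (E - {a} - {x})} = 3" "{a, x, join_of (E - {a} - {x})} \<subseteq> gen_bsa E"
proof -
  have sets: "{a} \<subseteq> E" "{a} \<noteq> {}" "{x} \<subseteq> E - {a}" "{x} \<noteq> {}" using a x by auto
  have "{x} \<noteq> E - {a}"
  proof
    assume "{x} = E - {a}"
    then have "card (E - {a}) = card {x}" by simp
    with E(2) card_Diff_singleton[OF a] show False by simp
  qed
  from ortho_partition_three_blocks[OF E(1) sets this]
  show "ortho_partition oc {a, x, join_of (E - {a} - {x})}"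
    "card {a, x, join_of (E - {a} - {x})} = 3" "{a, x, join_of (E - {a} - {x})} \<subseteq> gen_bsa E"
    by simp_all
qed

lemma coarsen3_inj_on:
  assumes E: "ortho_partition oc E" "4 \<le> card E" and a: "a \<in> E"
  shows "inj_on (\<lambda>x. {a, x, join_of (E - {a} - {x})}) (E - {a})"
proof (rule inj_onI)
  fix x y assume x: "x \<in> E - {a}" and y: "y \<in> E - {a}"
    and eq: "{a, x, join_of (E - {a} - {x})} = {a, y, join_of (E - {a} - {y})}"
  have "x \<noteq> join_of (E - {a} - {y})"
  proof
    assume "x = join_of (E - {a} - {y})"
    then have "join_of {x} = join_of (E - {a} - {y})" by simp
    moreover have "{x} \<subseteq> E" "E - {a} - {y} \<subseteq> E" using x by auto
    ultimately have "{x} = E - {a} - {y}" by (intro join_of_inject[OF E(1)])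
    then have "card (E - {a} - {y}) = card {x}" by simp
    with E(2) card_Diff_singleton[OF a] card_Diff_singleton[OF y] show False by simp
  qed
  moreover have "x \<in> {a, y, join_of (E - {a} - {y})}" using eq by blast
  ultimately show "x = y" using x by blast
qed

lemma card_dim3_above_member:
  assumes E: "ortho_partition oc E" "card E = 4" and a: "a \<in> E"
  shows "card {U. inB oc U \<and> dim U = 3 \<and> bsa2 a \<subset> U \<and> U \<subseteq> gen_bsa E} = 3"
proof -
  define T where "T x = {a, x, join_of (E - {a} - {x})}" for x
  have T: "ortho_partition oc (T x)" "card (T x) = 3" "T x \<subseteq> gen_bsa E" if "x \<in> E - {a}" for x
    using ortho_partition_coarsen3[OF E(1) _ a that] E(2) unfolding T_def by simp_all
  have "{U. inB oc U \<and> dim U = 3 \<and> bsa2 a \<subset> U \<and> U \<subseteq> gen_bsa E} = gen_bsa ` T ` (E - {a})"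
  proof (intro equalityI subsetI)
    fix U assume "U \<in> {U. inB oc U \<and> dim U = 3 \<and> bsa2 a \<subset> U \<and> U \<subseteq> gen_bsa E}"
    then obtain F where F: "ortho_partition oc F" "card F = 3" "U = gen_bsa F" "a \<in> gen_bsa F"
      "F \<subseteq> gen_bsa E"
      using dim3_above_bsa2E by blast
    obtain x where "x \<in> E - {a}" "F = T x"
      using dim3_partition_above_member[OF E a F(1,2,4,5)] unfolding T_def by blast
    then show "U \<in> gen_bsa ` T ` (E - {a})" using F(3) by blast
  next
    fix U assume "U \<in> gen_bsa ` T ` (E - {a})"
    then obtain x where x: "x \<in> E - {a}" "U = gen_bsa (T x)" by blast
    have "a \<in> T x" unfolding T_def by simp
    with gen_bsa_dim3_above_bsa2[OF E(1) T(1,2)[OF x(1)] _ T(3)[OF x(1)]] x(2)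
    show "U \<in> {U. inB oc U \<and> dim U = 3 \<and> bsa2 a \<subset> U \<and> U \<subseteq> gen_bsa E}" by simp
  qed
  moreover have "inj_on gen_bsa (T ` (E - {a}))"
    using gen_bsa_eq_iff T(1) by (auto intro: inj_onI)
  moreover have "inj_on T (E - {a})" using coarsen3_inj_on[OF E(1) _ a] E(2) unfolding T_def by simp
  moreover have "card (E - {a}) = 3" using E(2) card_Diff_singleton[OF a] by simp
  ultimately show ?thesis by (simp add: card_image)
qed

lemma dim3_partition_above_pair:
  assumes E: "ortho_partition oc E" "E = {p1, p2, q1, q2}"
    and d: "p1 \<noteq> p2" "q1 \<noteq> q2" "p1 \<noteq> q1" "p1 \<noteq> q2" "p2 \<noteq> q1" "p2 \<noteq> q2"
    and F: "ortho_partition oc F" "card F = 3" "sup p1 p2 \<in> F" "F \<subseteq> gen_bsa E"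
  shows "F = {sup p1 p2, q1, q2}"
proof -
  have Y: "{p1, p2} \<subseteq> E" using E(2) by blast
  have rest: "E - {p1, p2} = {q1, q2}" using E(2) d by auto
  have "join_of {p1, p2} \<in> F" using F(3) by simp
  then obtain X where X: "X \<subseteq> E - {p1, p2}" "X \<noteq> {}" "X \<noteq> E - {p1, p2}"
    and F_eq: "F = {join_of {p1, p2}, join_of X, join_of (E - {p1, p2} - X)}"
    by (rule dim3_partition_containing_join[OF E(1) Y F(1,2) _ F(4)])
  have "q2 \<noteq> q1" using d(2) by blast
  from subset_pair_cases[OF X[unfolded rest] d(2)] show ?thesis
  proof
    assume "X = {q1}"
    then show ?thesis using F_eq \<open>q2 \<noteq> q1\<close> unfolding rest by (simp add: insert_Diff_if)
  next
    assume "X = {q2}"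
    then show ?thesis using F_eq d(2) unfolding rest by (simp add: insert_Diff_if insert_commute)
  qed
qed

lemma card_dim3_above_pair_le:
  assumes E: "ortho_partition oc E" "E = {p1, p2, q1, q2}"
    and d: "p1 \<noteq> p2" "q1 \<noteq> q2" "p1 \<noteq> q1" "p1 \<noteq> q2" "p2 \<noteq> q1" "p2 \<noteq> q2"
    and P: "oc P = sup q1 q2" "P = sup p1 p2"
  shows "card {U. inB oc U \<and> dim U = 3 \<and> bsa2 P \<subset> U \<and> U \<subseteq> gen_bsa E} \<le> 2"
proof -
  have E': "E = {q1, q2, p1, p2}" using E(2) by auto
  have d': "q1 \<noteq> q2" "p1 \<noteq> p2" "q1 \<noteq> p1" "q1 \<noteq> p2" "q2 \<noteq> p1" "q2 \<noteq> p2"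
    using d by auto
  have "p1 \<noteq> bot" "q1 \<noteq> bot" using ortho_partitionD(2)[OF E(1)] E(2) by auto
  then have "P \<noteq> bot" "oc P \<noteq> bot" using P by simp_all
  then have P_nt: "P \<noteq> bot" "P \<noteq> top" by auto
  have "{U. inB oc U \<and> dim U = 3 \<and> bsa2 P \<subset> U \<and> U \<subseteq> gen_bsa E}
      \<subseteq> {gen_bsa {P, q1, q2}, gen_bsa {oc P, p1, p2}}"
  proof
    fix U assume "U \<in> {U. inB oc U \<and> dim U = 3 \<and> bsa2 P \<subset> U \<and> U \<subseteq> gen_bsa E}"
    then obtain F where F: "ortho_partition oc F" "card F = 3" "U = gen_bsa F" "P \<in> gen_bsa F"
      and FE: "F \<subseteq> gen_bsa E"
      using dim3_above_bsa2E by blast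
    from F(4) consider "P \<in> F" | "oc P \<in> F" using dim3_mem_or_oc_mem[OF F(1,2)] P_nt by blast
    then have "F = {P, q1, q2} \<or> F = {oc P, p1, p2}"
    proof cases
      case 1
      then show ?thesis using dim3_partition_above_pair[OF E d F(1,2) _ FE] P(2) by simp
    next
      case 2
      then show ?thesis using dim3_partition_above_pair[OF E(1) E' d' F(1,2) _ FE] P(1) by simp
    qed
    then show "U \<in> {gen_bsa {P, q1, q2}, gen_bsa {oc P, p1, p2}}" using F(3) by blast
  qed
  then have "card {U. inB oc U \<and> dim U = 3 \<and> bsa2 P \<subset> U \<and> U \<subseteq> gen_bsa E}
      \<le> card {gen_bsa {P, q1, q2}, gen_bsa {oc P, p1, p2}}"
    by (rule card_mono[rotated]) simp
  also have "\<dots> \<le> 2" by (simp add: card_insert_if)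
  finally show ?thesis .
qed

lemma non_atoms_imp_dim4_witness:
  assumes P: "P \<noteq> bot" "P \<noteq> top" "\<not> atom P" "\<not> atom (oc P)"
  shows "\<exists>W. inB oc W \<and> dim W = 4 \<and> bsa2 P \<subseteq> W \<and>
    card {U. inB oc U \<and> dim U = 3 \<and> bsa2 P \<subset> U \<and> U \<subseteq> W} \<noteq> 3"
proof -
  note F0 = ortho_partition_pair[OF P(1,2)]
  have "P \<noteq> oc P" using F0(2) by auto
  obtain p1 p2 where s1: "ortho_partition oc (insert p1 (insert p2 ({P, oc P} - {P})))"
    "gen_bsa {P, oc P} \<subset> gen_bsa (insert p1 (insert p2 ({P, oc P} - {P})))"
    "P = sup p1 p2" "p1 \<noteq> p2" "p1 \<notin> {P, oc P}" "p2 \<notin> {P, oc P}"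
    by (rule non_atom_refinement[OF F0(1) _ P(3)]) simp
  define F1 where "F1 = {p1, p2, oc P}"
  have "insert p1 (insert p2 ({P, oc P} - {P})) = F1" using \<open>P \<noteq> oc P\<close> unfolding F1_def by auto
  note s1 = s1[unfolded this]
  obtain q1 q2 where s2: "ortho_partition oc (insert q1 (insert q2 (F1 - {oc P})))"
    "gen_bsa F1 \<subset> gen_bsa (insert q1 (insert q2 (F1 - {oc P})))"
    "oc P = sup q1 q2" "q1 \<noteq> q2" "q1 \<notin> F1" "q2 \<notin> F1"
    by (rule non_atom_refinement[OF s1(1) _ P(4)]) (simp add: F1_def)
  define E where "E = {p1, p2, q1, q2}"
  have "insert q1 (insert q2 (F1 - {oc P})) = E" using s1(5,6) unfolding F1_def E_def by auto
  note s2 = s2[unfolded this]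
  have d: "p1 \<noteq> p2" "q1 \<noteq> q2" "p1 \<noteq> q1" "p1 \<noteq> q2" "p2 \<noteq> q1" "p2 \<noteq> q2"
    using s1(4) s2(4,5,6) unfolding F1_def by auto
  have "card E = 4" using d unfolding E_def by simp
  then have "inB oc (gen_bsa E)" "dim (gen_bsa E) = 4"
    using inB_gen_bsa[OF s2(1)] dim_gen_bsa[OF s2(1)] by simp_all
  moreover have "bsa2 P \<subseteq> gen_bsa E" using s1(2) s2(2) unfolding bsa2_def by blast
  moreover have "card {U. inB oc U \<and> dim U = 3 \<and> bsa2 P \<subset> U \<and> U \<subseteq> gen_bsa E} \<le> 2"
    using card_dim3_above_pair_le[OF s2(1) E_def d s2(3) s1(3)] .
  ultimately show ?thesis by (intro exI[of _ "gen_bsa E"]) auto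
qed

lemma card_dim3_between_atom:
  assumes W: "inB oc W" "dim W = 4" and x: "atom x" "bsa2 x \<subseteq> W"
  shows "card {U. inB oc U \<and> dim U = 3 \<and> bsa2 x \<subset> U \<and> U \<subseteq> W} = 3"
proof -
  obtain E where E: "ortho_partition oc E" "card E = 4" "W = gen_bsa E"
    using inB_dimE[OF W] by auto
  have "x \<in> E" using atom_mem_gen_bsa_imp_mem[OF E(1) _ x(1)] mem_bsa2[of x] x(2) E(3) by blast
  then show ?thesis using card_dim3_above_member[OF E(1,2)] E(3) by simp
qed

lemma atom_or_oc_atom_iff_card_dim3_between:
  assumes "P \<noteq> bot" "P \<noteq> top"
  shows "(atom P \<or> atom (oc P)) \<longleftrightarrow>
    (\<forall>W. inB oc W \<and> dim W = 4 \<and> bsa2 P \<subseteq> W \<longrightarrow>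
      card {U. inB oc U \<and> dim U = 3 \<and> bsa2 P \<subset> U \<and> U \<subseteq> W} = 3)"
proof
  assume "atom P \<or> atom (oc P)"
  then obtain x where "atom x" "bsa2 P = bsa2 x" using bsa2_oc by metis
  then show "\<forall>W. inB oc W \<and> dim W = 4 \<and> bsa2 P \<subseteq> W \<longrightarrow>
      card {U. inB oc U \<and> dim U = 3 \<and> bsa2 P \<subset> U \<and> U \<subseteq> W} = 3"
    using card_dim3_between_atom by simp
next
  assume "\<forall>W. inB oc W \<and> dim W = 4 \<and> bsa2 P \<subseteq> W \<longrightarrow>
      card {U. inB oc U \<and> dim U = 3 \<and> bsa2 P \<subset> U \<and> U \<subseteq> W} = 3"
  then show "atom P \<or> atom (oc P)" using non_atoms_imp_dim4_witness[OF assms] by blast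
qed

lemma dim2_gen_family_eq:
  assumes "inB oc V" "dim V = 2" "gen_family V = {P, oc P}"
  shows "V = bsa2 P" "P \<noteq> bot" "P \<noteq> top"
proof -
  obtain E where E: "ortho_partition oc E" "card E = 2" "V = gen_bsa E"
    using inB_dimE[OF assms(1,2)] by auto
  then have "E = {P, oc P}" using assms(3) gen_family_gen_bsa by simp
  then show "V = bsa2 P" "P \<noteq> bot" "P \<noteq> top"
    using E(1,3) ortho_partitionD(2)[OF E(1)] unfolding bsa2_def by auto
qed

lemma maximalB_bsa2_imp_atoms:
  assumes "P \<noteq> bot" "P \<noteq> top" "maximalB oc (bsa2 P)"
  shows "atom P" "atom (oc P)"
  using maximalB_imp_atom[OF ortho_partition_pair(1)[OF assms(1,2)]] assms(3)
  unfolding bsa2_def by simp_all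

end

theorem lemma3p2:
  fixes oc :: "'a::bounded_lattice \<Rightarrow> 'a" and V :: "'a set" and P :: 'a
  assumes oml: "orthomodular oc"
    and atm: "atomic TYPE('a)"
    and VB: "inB oc V"
    and Vdim: "dim V = 2"
    and FV: "gen_family V = {P, oc P}"
  shows
    "(maximalB oc V \<longrightarrow> atom P \<and> atom (oc P))
   \<and> (\<forall>W. inB oc W \<and> dim W = 3 \<and> maximalB oc W \<and> V \<subseteq> W \<longrightarrow>
        ((atom P \<and> (\<exists>a b. atom a \<and> atom b \<and> a \<noteq> b \<and> oc P = sup a b)) \<or>
         (atom (oc P) \<and> (\<exists>a b. atom a \<and> atom b \<and> a \<noteq> b \<and> P = sup a b))) \<and>
        card {U. inB oc U \<and> dim U = 2 \<and> U \<subseteq> W \<and> U \<noteq> V} = 2)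
   \<and> (\<not> maximalB oc V \<and>
      \<not> (\<exists>W. inB oc W \<and> dim W = 3 \<and> maximalB oc W \<and> V \<subseteq> W) \<longrightarrow>
        ((atom P \<or> atom (oc P)) \<longleftrightarrow>
         (\<forall>W. inB oc W \<and> dim W = 4 \<and> V \<subseteq> W \<longrightarrow>
            card {U. inB oc U \<and> dim U = 3 \<and> V \<subset> U \<and> U \<subseteq> W} = 3)))"
proof -
  interpret orthomodular_lattice oc using oml by (rule orthomodular_lattice.intro)
  note V = dim2_gen_family_eq[OF VB Vdim FV]
  have "P \<in> V" using V(1) mem_bsa2 by simp
  show ?thesis
    using maximalB_bsa2_imp_atoms[OF V(2,3)] maximalB_dim3_atoms[OF _ _ _ _ V(2,3)]
      card_other_dim2_subalgebras[OF _ _ VB Vdim] atom_or_oc_atom_iff_card_dim3_between[OF V(2,3)]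
      V(1) \<open>P \<in> V\<close> by blast
qed

end
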